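(* Let $L$ be a positive integer and let $X$ and $X_{\mathcal{K}}$, $\mathcal{K}\subseteq\mathcal{I}_L$, be jointly distributed random variables on finite sets with an arbitrary fixed joint distribution. Then the rate region $\{(R_1,\dots,R_L)\in\mathbb{R}^L: R_{\mathcal{K}}\ge\psi(\mathcal{K})\text{ for all }\emptyset\subset\mathcal{K}\subseteq\mathcal{I}_L\}$ is a contra-polymatroid.
   Context: $\mathcal{I}_L=\{1,\dots,L\}$. For a set $\mathcal{A}$, $2^{\mathcal{A}}$ is its power set; for a collection of sets $\mathcal{B}$, $X_{(\mathcal{B})}=\{X_{\mathcal{A}}:\mathcal{A}\in\mathcal{B}\}$ (so $X_{(\emptyset)}$ is a constant, while $X_{\emptyset}$ is the random variable indexed by the empty set). $R_{\mathcal{K}}=\sum_{k\in\mathcal{K}}R_k$. The set function $\psi$ on $2^{\mathcal{I}_L}$ is $\psi(\mathcal{K})=(|\mathcal{K}|-1)I(X;X_{\emptyset})-H(X_{(2^{\mathcal{K}})}|X)+\sum_{\mathcal{A}\subseteq\mathcal{K}}H(X_{\mathcal{A}}|X_{(2^{\mathcal{A}}-\{\mathcal{A}\})})$. A contra-polymatroid (in the sense of Edmonds) is a set of the form $\{(R_1,\dots,R_L): R_{\mathcal{K}}\ge g(\mathcal{K})\ \forall\,\emptyset\subset\mathcal{K}\subseteq\mathcal{I}_L\}$ where $g:2^{\mathcal{I}_L}\to\mathbb{R}$ satisfies $g(\emptyset)=0$, $g(\mathcal{S})\le g(\mathcal{T})$ whenever $\mathcal{S}\subset\mathcal{T}$,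 and $g(\mathcal{S})+g(\mathcal{T})\le g(\mathcal{S}\cup\mathcal{T})+g(\mathcal{S}\cap\mathcal{T})$ for all $\mathcal{S},\mathcal{T}$. *)

theory Defs
  imports "HOL-Probability.Probability_Mass_Function"
begin

definition ent :: "'w pmf \<Rightarrow> ('w \<Rightarrow> 'v) \<Rightarrow> real" where
  "ent p f = - (\<Sum>v \<in> f ` set_pmf p.
      measure_pmf.prob p {w. f w = v} * log 2 (measure_pmf.prob p {w. f w = v}))"

definition cond_ent :: "'w pmf \<Rightarrow> ('w \<Rightarrow> 'u) \<Rightarrow> ('w \<Rightarrow> 'v) \<Rightarrow> real" where
  "cond_ent p f g = ent p (\<lambda>w. (f w, g w)) - ent p g"

definition mut_info :: "'w pmf \<Rightarrow> ('w \<Rightarrow> 'u) \<Rightarrow> ('w \<Rightarrow> 'v) \<Rightarrow> real" where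
  "mut_info p f g = ent p f + ent p g - ent p (\<lambda>w. (f w, g w))"

definition coll :: "(nat set \<Rightarrow> 'w \<Rightarrow> 'b) \<Rightarrow> nat set set \<Rightarrow> 'w \<Rightarrow> (nat set \<Rightarrow> 'b)" where
  "coll Xs B = (\<lambda>w. restrict (\<lambda>A. Xs A w) B)"

definition psi :: "'w pmf \<Rightarrow> ('w \<Rightarrow> 'a) \<Rightarrow> (nat set \<Rightarrow> 'w \<Rightarrow> 'b) \<Rightarrow> nat set \<Rightarrow> real" where
  "psi p X Xs K =
     (real (card K) - 1) * mut_info p X (Xs {})
     - cond_ent p (coll Xs (Pow K)) X
     + (\<Sum>A \<in> Pow K. cond_ent p (Xs A) (coll Xs (Pow A - {A})))"

text \<open>Vectors in R^L are functions nat => real vanishing outside {1..L}.\<close>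
definition rvec :: "nat \<Rightarrow> (nat \<Rightarrow> real) set" where
  "rvec L = {R. \<forall>i. i \<notin> {1..L} \<longrightarrow> R i = 0}"

definition region :: "nat \<Rightarrow> (nat set \<Rightarrow> real) \<Rightarrow> (nat \<Rightarrow> real) set" where
  "region L g = {R \<in> rvec L. \<forall>K. K \<noteq> {} \<and> K \<subseteq> {1..L} \<longrightarrow> sum R K \<ge> g K}"

definition contra_polymatroid :: "nat \<Rightarrow> (nat \<Rightarrow> real) set \<Rightarrow> bool" where
  "contra_polymatroid L P \<longleftrightarrow> (\<exists>g :: nat set \<Rightarrow> real.
      g {} = 0
    \<and> (\<forall>S T. S \<subset> T \<and> T \<subseteq> {1..L} \<longrightarrow> g S \<le> g T)
    \<and> (\<forall>S T. S \<subseteq> {1..L} \<and> T \<subseteq> {1..L} \<longrightarrow> g S + g T \<le> g (S \<union> T) + g (S \<inter> T))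
    \<and> P = region L g)"

end

theory Submission
  imports Defs
begin

(*
  Write h(D) for the joint entropy of the subfamily of X, X_A (A <= I_L) indexed by D.
  Expanding conditional entropies and mutual information,
    psi(K) = (|K| - 1) I(X; X_{}) - h(X, X_(2^K)) + H(X) + sum_{A <= K} c(A),
  where c(A) = h(X_(2^A)) - h(X_(2^A - {A})).  Only submodularity of h (Shannon's
  inequality) is used.  Adding the members of a down-closed family in order of size,
  each new set A finds all its proper subsets present, so submodularity bounds the
  growth of h(X, X_(C)) by c(A).  Comparing 2^(S u T) with 2^S u 2^T, and the latter
  with 2^S and 2^T, together with modularity of |K| and I(X; X_{}) >= 0, makes psi
  monotone and supermodular.
*)

definition marginal :: "'t set \<Rightarrow> ('t \<Rightarrow> real) \<Rightarrow> ('t \<Rightarrow> 'u) \<Rightarrow> 'u \<Rightarrow> real" where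
  "marginal T a g u = (\<Sum>t\<in>{t\<in>T. g t = u}. a t)"

definition marginal_entropy :: "'t set \<Rightarrow> ('t \<Rightarrow> real) \<Rightarrow> ('t \<Rightarrow> 'u) \<Rightarrow> real" where
  "marginal_entropy T a g = - (\<Sum>u\<in>g ` T. marginal T a g u * log 2 (marginal T a g u))"

lemma sum_marginal: "finite T \<Longrightarrow> (\<Sum>u\<in>g ` T. marginal T a g u) = (\<Sum>t\<in>T. a t)"
  unfolding marginal_def by (rule sum.image_gen[symmetric])

lemma marginal_entropy_eq_sum:
  assumes "finite T"
  shows "marginal_entropy T a g = - (\<Sum>t\<in>T. a t * log 2 (marginal T a g (g t)))"
proof -
  have "(\<Sum>t\<in>T. a t * log 2 (marginal T a g (g t))) =
        (\<Sum>u\<in>g ` T. \<Sum>t\<in>{t\<in>T. g t = u}. a t * log 2 (marginal T a g (g t)))"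
    by (rule sum.image_gen[OF assms])
  also have "\<dots> = (\<Sum>u\<in>g ` T. marginal T a g u * log 2 (marginal T a g u))"
    by (rule sum.cong) (auto simp: marginal_def sum_distrib_right)
  finally show ?thesis
    unfolding marginal_entropy_def by simp
qed

lemma marginal_pos:
  assumes "finite T" "\<And>t. t \<in> T \<Longrightarrow> a t > 0" "t \<in> T"
  shows "marginal T a g (g t) > 0"
  unfolding marginal_def using assms by (intro sum_pos) auto

lemma marginal_id:
  assumes "t \<in> T"
  shows "marginal T a id t = a t"
proof -
  have "{t'\<in>T. id t' = t} = {t}"
    using assms by auto
  then show ?thesis
    by (simp add: marginal_def)
qed

lemma sum_fiber_marginal_products_le:
  fixes T :: "('x \<times> 'y \<times> 'z) set"
  assumes fin: "finite T" and pos: "\<And>t. t \<in> T \<Longrightarrow> a t > 0"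
  shows "(\<Sum>t\<in>{t\<in>T. snd (snd t) = z}. marginal T a (apsnd snd) (apsnd snd t) * marginal T a snd (snd t))
          \<le> marginal T a (snd \<circ> snd) z * marginal T a (snd \<circ> snd) z"
proof -
  define Tz where "Tz = {t\<in>T. snd (snd t) = z}"
  have finTz: "finite Tz" using fin unfolding Tz_def by auto
  define \<alpha> where "\<alpha> x = marginal T a (apsnd snd) (x, z)" for x
  define \<beta> where "\<beta> y = marginal T a snd (y, z)" for y
  have "t \<in> T \<Longrightarrow> a t \<ge> 0" for t
    using pos by (simp add: less_imp_le)
  then have \<alpha>_nonneg: "\<alpha> x \<ge> 0" and \<beta>_nonneg: "\<beta> y \<ge> 0" for x y
    unfolding \<alpha>_def \<beta>_def marginal_def by (auto intro!: sum_nonneg)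
  have inj: "inj_on (\<lambda>t. (fst t, fst (snd t))) Tz"
    unfolding inj_on_def Tz_def by (auto simp: prod_eq_iff)
  have "(\<Sum>t\<in>Tz. marginal T a (apsnd snd) (apsnd snd t) * marginal T a snd (snd t))
      = (\<Sum>(x, y)\<in>(\<lambda>t. (fst t, fst (snd t))) ` Tz. \<alpha> x * \<beta> y)"
    unfolding sum.reindex[OF inj] by (auto simp: Tz_def \<alpha>_def \<beta>_def intro!: sum.cong)
  also have "\<dots> \<le> (\<Sum>(x, y)\<in>fst ` Tz \<times> (fst \<circ> snd) ` Tz. \<alpha> x * \<beta> y)"
    by (rule sum_mono2) (auto simp: finTz \<alpha>_nonneg \<beta>_nonneg)
  also have "\<dots> = (\<Sum>x\<in>fst ` Tz. \<alpha> x) * (\<Sum>y\<in>(fst \<circ> snd) ` Tz. \<beta> y)"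
    by (simp add: sum_product sum.cartesian_product)
  also have "(\<Sum>x\<in>fst ` Tz. \<alpha> x) = (\<Sum>t\<in>Tz. a t)"
    unfolding sum.image_gen[OF finTz, of a fst]
    by (rule sum.cong) (auto simp: \<alpha>_def marginal_def Tz_def intro!: sum.cong)
  also have "(\<Sum>y\<in>(fst \<circ> snd) ` Tz. \<beta> y) = (\<Sum>t\<in>Tz. a t)"
    unfolding sum.image_gen[OF finTz, of a "fst \<circ> snd"]
    by (rule sum.cong) (auto simp: \<beta>_def marginal_def Tz_def intro!: sum.cong)
  finally show ?thesis
    by (simp add: Tz_def marginal_def)
qed

lemma sum_marginal_products_le:
  fixes T :: "('x \<times> 'y \<times> 'z) set"
  assumes fin: "finite T" and pos: "\<And>t. t \<in> T \<Longrightarrow> a t > 0"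
  shows "(\<Sum>t\<in>T. marginal T a (apsnd snd) (apsnd snd t) * marginal T a snd (snd t)
                   / marginal T a (snd \<circ> snd) (snd (snd t))) \<le> (\<Sum>t\<in>T. a t)"
    (is "(\<Sum>t\<in>T. ?P t / ?C (snd (snd t))) \<le> _")
proof -
  have "(\<Sum>t\<in>T. ?P t / ?C (snd (snd t))) = (\<Sum>z\<in>(snd \<circ> snd) ` T. (\<Sum>t\<in>{t\<in>T. snd (snd t) = z}. ?P t) / ?C z)"
    unfolding sum.image_gen[OF fin, of _ "snd \<circ> snd"]
    by (rule sum.cong) (auto simp: sum_divide_distrib comp_def)
  also have "\<dots> \<le> (\<Sum>z\<in>(snd \<circ> snd) ` T. ?C z)"
  proof (rule sum_mono)
    fix z assume "z \<in> (snd \<circ> snd) ` T"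
    then have "?C z > 0"
      using marginal_pos[where a = a, OF fin pos] by (auto simp: comp_def)
    then show "(\<Sum>t\<in>{t\<in>T. snd (snd t) = z}. ?P t) / ?C z \<le> ?C z"
      using sum_fiber_marginal_products_le[where a = a and z = z, OF fin pos]
      by (simp add: divide_le_eq comp_def)
  qed
  also have "\<dots> = (\<Sum>t\<in>T. a t)"
    by (rule sum_marginal[OF fin])
  finally show ?thesis .
qed

lemma mult_log_ratio_ge:
  fixes a b :: real
  assumes "a > 0" "b > 0"
  shows "a * log 2 (a / b) \<ge> (a - b) / ln 2"
proof -
  have "ln (b / a) \<le> b / a - 1"
    using assms by (intro ln_le_minus_one) simp
  then have "a * ln (a / b) \<ge> a - b"
    using assms by (simp add: ln_div field_simps)
  then show ?thesis
    by (simp add: log_def divide_right_mono)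
qed

lemma marginal_entropy_submodular:
  fixes T :: "('x \<times> 'y \<times> 'z) set"
  assumes fin: "finite T" and pos: "\<And>t. t \<in> T \<Longrightarrow> a t > 0"
  shows "marginal_entropy T a id + marginal_entropy T a (snd \<circ> snd)
       \<le> marginal_entropy T a (apsnd snd) + marginal_entropy T a snd"
proof -
  define A where "A t = marginal T a (apsnd snd) (apsnd snd t)" for t :: "'x \<times> 'y \<times> 'z"
  define B where "B t = marginal T a snd (snd t)" for t :: "'x \<times> 'y \<times> 'z"
  define C where "C t = marginal T a (snd \<circ> snd) (snd (snd t))" for t :: "'x \<times> 'y \<times> 'z"
  have ABC_pos: "A t > 0" "B t > 0" "C t > 0" if "t \<in> T" for t
    unfolding A_def B_def C_def
    using marginal_pos[where a = a, OF fin pos that, of "apsnd snd"]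
      marginal_pos[where a = a, OF fin pos that, of snd]
      marginal_pos[where a = a, OF fin pos that, of "snd \<circ> snd"] by simp_all
  (* Gibbs' inequality for a against the weights A B / C, under which the first two
     coordinates are independent given the third; their total mass is at most that of a. *)
  have "0 \<le> ((\<Sum>t\<in>T. a t) - (\<Sum>t\<in>T. A t * B t / C t)) / ln 2"
    using sum_marginal_products_le[OF fin pos] unfolding A_def B_def C_def by simp
  also have "\<dots> = (\<Sum>t\<in>T. (a t - A t * B t / C t) / ln 2)"
    by (simp add: sum_divide_distrib[symmetric] sum_subtractf)
  also have "\<dots> \<le> (\<Sum>t\<in>T. a t * log 2 (a t / (A t * B t / C t)))"
    using pos ABC_pos by (intro sum_mono mult_log_ratio_ge) auto
  also have "\<dots> = (\<Sum>t\<in>T. a t * log 2 (a t) + a t * log 2 (C t) - a t * log 2 (A t) - a t * log 2 (B t))"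
  proof (rule sum.cong[OF refl])
    fix t assume "t \<in> T"
    then have "a t > 0" "A t > 0" "B t > 0" "C t > 0"
      using pos ABC_pos by auto
    then show "a t * log 2 (a t / (A t * B t / C t))
             = a t * log 2 (a t) + a t * log 2 (C t) - a t * log 2 (A t) - a t * log 2 (B t)"
      by (simp add: log_mult log_divide algebra_simps)
  qed
  also have "\<dots> = marginal_entropy T a (apsnd snd) + marginal_entropy T a snd
                   - marginal_entropy T a id - marginal_entropy T a (snd \<circ> snd)"
    unfolding marginal_entropy_eq_sum[OF fin] A_def B_def C_def
    by (simp add: marginal_id sum_subtractf sum.distrib cong: sum.cong)
  finally show ?thesis by simp
qed

lemma ent_comp_eq_marginal_entropy:
  fixes F :: "'w \<Rightarrow> 't" and k :: "'t \<Rightarrow> 'u"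
  assumes fin: "finite (F ` set_pmf p)"
  shows "ent p (\<lambda>w. k (F w)) = marginal_entropy (set_pmf (map_pmf F p)) (pmf (map_pmf F p)) k"
proof -
  define q where "q = map_pmf F p"
  have set_q: "set_pmf q = F ` set_pmf p"
    by (simp add: q_def)
  have "measure_pmf.prob p {w. k (F w) = u} = marginal (set_pmf q) (pmf q) k u" for u
  proof -
    have "measure_pmf.prob p {w. k (F w) = u} = measure_pmf.prob q {t. k t = u}"
      by (simp add: q_def measure_map_pmf vimage_def)
    also have "\<dots> = measure_pmf.prob q ({t. k t = u} \<inter> set_pmf q)"
      by (simp add: measure_Int_set_pmf)
    also have "\<dots> = sum (pmf q) ({t. k t = u} \<inter> set_pmf q)"
      using fin set_q by (intro measure_measure_pmf_finite) auto
    finally show ?thesis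
      unfolding marginal_def by (simp add: Int_def conj_commute)
  qed
  moreover have "(\<lambda>w. k (F w)) ` set_pmf p = k ` set_pmf q"
    by (auto simp: set_q)
  ultimately show ?thesis
    unfolding ent_def marginal_entropy_def q_def[symmetric] by simp
qed

lemma ent_submodular:
  assumes "finite (f ` set_pmf p)" "finite (g ` set_pmf p)" "finite (h ` set_pmf p)"
  shows "ent p (\<lambda>w. (f w, g w, h w)) + ent p h \<le> ent p (\<lambda>w. (f w, h w)) + ent p (\<lambda>w. (g w, h w))"
proof -
  define F where "F w = (f w, g w, h w)" for w
  have fin: "finite (F ` set_pmf p)"
    by (rule finite_subset[of _ "f ` set_pmf p \<times> g ` set_pmf p \<times> h ` set_pmf p"])
      (auto simp: F_def assms)
  define q where "q = map_pmf F p"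
  have "finite (set_pmf q)"
    using fin by (simp add: q_def)
  then have "marginal_entropy (set_pmf q) (pmf q) id + marginal_entropy (set_pmf q) (pmf q) (snd \<circ> snd)
      \<le> marginal_entropy (set_pmf q) (pmf q) (apsnd snd) + marginal_entropy (set_pmf q) (pmf q) snd"
    by (rule marginal_entropy_submodular) (simp add: pmf_positive)
  then show ?thesis
    using ent_comp_eq_marginal_entropy[OF fin, of id] ent_comp_eq_marginal_entropy[OF fin, of "snd \<circ> snd"]
      ent_comp_eq_marginal_entropy[OF fin, of "apsnd snd"] ent_comp_eq_marginal_entropy[OF fin, of snd]
    by (simp add: F_def q_def)
qed

lemma ent_eq_if_same_fibers:
  assumes fin: "finite (g ` set_pmf p)"
    and same: "\<And>w w'. w \<in> set_pmf p \<Longrightarrow> w' \<in> set_pmf p \<Longrightarrow> f w = f w' \<longleftrightarrow> g w = g w'"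
  shows "ent p f = ent p g"
proof -
  let ?S = "set_pmf p"
  define \<phi> where "\<phi> v = f (SOME w. w \<in> ?S \<and> g w = v)" for v
  have \<phi>: "\<phi> (g w) = f w" if "w \<in> ?S" for w
  proof -
    have "\<exists>w'. w' \<in> ?S \<and> g w' = g w"
      using that by blast
    then have "(SOME w'. w' \<in> ?S \<and> g w' = g w) \<in> ?S \<and> g (SOME w'. w' \<in> ?S \<and> g w' = g w) = g w"
      by (rule someI_ex)
    then show ?thesis
      unfolding \<phi>_def using same that by blast
  qed
  have img: "f ` ?S = \<phi> ` g ` ?S"
    by (auto simp: \<phi> image_image intro!: image_cong)
  have inj: "inj_on \<phi> (g ` ?S)"
    using \<phi> same by (auto simp: inj_on_def)
  have "measure_pmf.prob p {w. f w = \<phi> v} = measure_pmf.prob p {w. g w = v}" if "v \<in> g ` ?S" for v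
  proof -
    have "{w. f w = \<phi> v} \<inter> ?S = {w. g w = v} \<inter> ?S"
      using \<phi> same that by auto
    then show ?thesis
      by (metis measure_Int_set_pmf)
  qed
  then show ?thesis
    unfolding ent_def img sum.reindex[OF inj] by (auto intro!: sum.cong)
qed

lemma ent_const: "ent p (\<lambda>w. c) = 0"
proof -
  have "set_pmf p \<noteq> {}"
    by (rule set_pmf_not_empty)
  then have "(\<lambda>w. c) ` set_pmf p = {c}"
    by auto
  then show ?thesis
    by (simp add: ent_def)
qed

definition joint :: "('i \<Rightarrow> 'w \<Rightarrow> 'v) \<Rightarrow> 'i set \<Rightarrow> 'w \<Rightarrow> ('i \<Rightarrow> 'v)" where
  "joint Y D = (\<lambda>w. restrict (\<lambda>i. Y i w) D)"

lemma joint_eq_iff: "joint Y D w = joint Y D w' \<longleftrightarrow> (\<forall>i\<in>D. Y i w = Y i w')"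
  unfolding joint_def restrict_def fun_eq_iff by auto

lemma finite_joint_image:
  assumes "finite D" "\<And>i. i \<in> D \<Longrightarrow> finite (Y i ` S)"
  shows "finite (joint Y D ` S)"
  by (rule finite_subset[of _ "PiE D (\<lambda>i. Y i ` S)"]) (auto simp: joint_def assms finite_PiE)

lemma ent_joint_empty: "ent p (joint Y {}) = 0"
  by (simp add: joint_def restrict_def ent_const)

lemma ent_joint_submodular:
  assumes U: "finite U" and V: "finite V" and fin: "\<And>i. i \<in> U \<union> V \<Longrightarrow> finite (Y i ` set_pmf p)"
  shows "ent p (joint Y (U \<union> V)) + ent p (joint Y (U \<inter> V)) \<le> ent p (joint Y U) + ent p (joint Y V)"
proof -
  have fin_joint: "finite (joint Y D ` set_pmf p)" if "D \<subseteq> U \<union> V" for D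
    using that U V fin by (intro finite_joint_image) (auto intro: finite_subset)
  have "ent p (\<lambda>w. (joint Y (U - V) w, joint Y (V - U) w, joint Y (U \<inter> V) w)) + ent p (joint Y (U \<inter> V))
     \<le> ent p (\<lambda>w. (joint Y (U - V) w, joint Y (U \<inter> V) w)) + ent p (\<lambda>w. (joint Y (V - U) w, joint Y (U \<inter> V) w))"
    by (rule ent_submodular) (auto intro!: fin_joint)
  moreover have "ent p (\<lambda>w. (joint Y (U - V) w, joint Y (V - U) w, joint Y (U \<inter> V) w)) = ent p (joint Y (U \<union> V))"
    and "ent p (\<lambda>w. (joint Y (U - V) w, joint Y (U \<inter> V) w)) = ent p (joint Y U)"
    and "ent p (\<lambda>w. (joint Y (V - U) w, joint Y (U \<inter> V) w)) = ent p (joint Y V)"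
    by (rule ent_eq_if_same_fibers; auto intro!: fin_joint simp: joint_eq_iff)+
  ultimately show ?thesis
    by simp
qed

definition submodular_on :: "'i set \<Rightarrow> ('i set \<Rightarrow> real) \<Rightarrow> bool" where
  "submodular_on D h \<longleftrightarrow> (\<forall>U V. U \<subseteq> D \<longrightarrow> V \<subseteq> D \<longrightarrow> h (U \<union> V) + h (U \<inter> V) \<le> h U + h V)"

lemma submodular_onD:
  "submodular_on D h \<Longrightarrow> U \<subseteq> D \<Longrightarrow> V \<subseteq> D \<Longrightarrow> h (U \<union> V) + h (U \<inter> V) \<le> h U + h V"
  unfolding submodular_on_def by blast

definition cond_increment :: "('i set option set \<Rightarrow> real) \<Rightarrow> 'i set \<Rightarrow> real" where
  "cond_increment h A = h (Some ` Pow A) - h (Some ` (Pow A - {A}))"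

(* psi in terms of the joint entropies h D: the index None stands for X, Some A for X_A. *)
definition psi_of :: "('i set option set \<Rightarrow> real) \<Rightarrow> 'i set \<Rightarrow> real" where
  "psi_of h K = (real (card K) - 1) * (h {None} + h {Some {}} - h {None, Some {}})
     - h (insert None (Some ` Pow K)) + h {None} + (\<Sum>A\<in>Pow K. cond_increment h A)"

lemma psi_of_empty: "h {} = 0 \<Longrightarrow> psi_of h {} = 0"
  by (simp add: psi_of_def cond_increment_def insert_commute)

context
  fixes N :: "'i set" and h :: "'i set option set \<Rightarrow> real"
  assumes fin: "finite N"
    and submod: "submodular_on (insert None (Some ` Pow N)) h"
    and empty: "h {} = 0"
begin

lemma mutual_term_nonneg: "0 \<le> h {None} + h {Some {}} - h {None, Some {}}"
  using submodular_onD[OF submod, of "{None}" "{Some {}}"] empty by (simp add: insert_commute)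

lemma insert_increase_le_cond_increment:
  assumes "B \<subseteq> Pow N" "A \<subseteq> N" "A \<notin> B" "Pow A - {A} \<subseteq> B"
  shows "h (insert None (Some ` insert A B)) - h (insert None (Some ` B)) \<le> cond_increment h A"
proof -
  have "h (insert None (Some ` B) \<union> Some ` Pow A) + h (insert None (Some ` B) \<inter> Some ` Pow A)
      \<le> h (insert None (Some ` B)) + h (Some ` Pow A)"
    using assms(1,2)
    by (intro submodular_onD[OF submod, of "insert None (Some ` B)" "Some ` Pow A"]) blast+
  moreover have "insert None (Some ` B) \<union> Some ` Pow A = insert None (Some ` insert A B)"
    and "insert None (Some ` B) \<inter> Some ` Pow A = Some ` (Pow A - {A})"
    using assms(3,4) by blast+
  ultimately show ?thesis
    unfolding cond_increment_def by simp
qed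

(* The set A added at each step has minimal cardinality in C - B, so all its proper
   subsets are already in B. *)
lemma sum_cond_increment_ge:
  assumes C: "C \<subseteq> Pow N" "\<forall>A\<in>C. Pow A \<subseteq> C" and B: "B \<subseteq> C" "\<forall>A\<in>B. Pow A \<subseteq> B"
  shows "h (insert None (Some ` C)) - h (insert None (Some ` B)) \<le> (\<Sum>A\<in>C - B. cond_increment h A)"
  using B
proof (induction "card (C - B)" arbitrary: B rule: less_induct)
  case less
  have fin_CB: "finite (C - B)"
    using rev_finite_subset[OF finite_Pow_iff[THEN iffD2, OF fin] C(1)] by simp
  show ?case
  proof (cases "C - B = {}")
    case True
    with less.prems have "B = C"
      by blast
    then show ?thesis
      by simp
  next
    case False
    then obtain A where A: "A \<in> C - B" and A_min: "\<And>A'. A' \<in> C - B \<Longrightarrow> card A \<le> card A'"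
      using ex_has_least_nat[of "\<lambda>A. A \<in> C - B" _ card] by blast
    have "finite A"
      using A C(1) by (intro rev_finite_subset[OF fin]) blast
    have proper_subsets: "Pow A - {A} \<subseteq> B"
    proof
      fix A' assume "A' \<in> Pow A - {A}"
      then have "A' \<subset> A"
        by auto
      then have "card A' < card A"
        by (rule psubset_card_mono[OF \<open>finite A\<close>])
      moreover have "A' \<in> C"
        using \<open>A' \<subset> A\<close> A C(2) by blast
      ultimately show "A' \<in> B"
        using A_min by force
    qed
    have "card (C - insert A B) < card (C - B)"
      using A fin_CB by (intro psubset_card_mono) blast+
    moreover have "insert A B \<subseteq> C" "\<forall>A'\<in>insert A B. Pow A' \<subseteq> insert A B"
      using less.prems A proper_subsets by blast+
    ultimately have IH: "h (insert None (Some ` C)) - h (insert None (Some ` insert A B))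
        \<le> (\<Sum>A\<in>C - insert A B. cond_increment h A)"
      by (rule less.hyps)
    have step: "h (insert None (Some ` insert A B)) - h (insert None (Some ` B)) \<le> cond_increment h A"
      using less.prems(1) A C(1) proper_subsets by (intro insert_increase_le_cond_increment) blast+
    have "(\<Sum>A\<in>C - B. cond_increment h A) = cond_increment h A + (\<Sum>A\<in>C - insert A B. cond_increment h A)"
      using sum.remove[OF fin_CB A] unfolding Diff_insert[symmetric] .
    with IH step show ?thesis
      by linarith
  qed
qed

lemma psi_of_mono:
  assumes "S \<subset> T" "T \<subseteq> N"
  shows "psi_of h S \<le> psi_of h T"
proof -
  have fin_T: "finite T"
    using assms by (intro rev_finite_subset[OF fin])
  have "h (insert None (Some ` Pow T)) - h (insert None (Some ` Pow S))
      \<le> (\<Sum>A\<in>Pow T - Pow S. cond_increment h A)"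
    using assms by (intro sum_cond_increment_ge) auto
  moreover have "(\<Sum>A\<in>Pow T. cond_increment h A)
      = (\<Sum>A\<in>Pow T - Pow S. cond_increment h A) + (\<Sum>A\<in>Pow S. cond_increment h A)"
    using assms fin_T by (intro sum.subset_diff) auto
  moreover have "(real (card S) - 1) * (h {None} + h {Some {}} - h {None, Some {}})
      \<le> (real (card T) - 1) * (h {None} + h {Some {}} - h {None, Some {}})"
    using assms fin_T by (intro mult_right_mono mutual_term_nonneg) (auto intro: card_mono)
  ultimately show ?thesis
    unfolding psi_of_def by linarith
qed

lemma psi_of_supermodular:
  assumes S: "S \<subseteq> N" and T: "T \<subseteq> N"
  shows "psi_of h S + psi_of h T \<le> psi_of h (S \<union> T) + psi_of h (S \<inter> T)"
proof -
  let ?I = "h {None} + h {Some {}} - h {None, Some {}}"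
  let ?G = "\<lambda>\<A>. \<Sum>A\<in>\<A>. cond_increment h A"
  have fin_S: "finite S" and fin_T: "finite T"
    using S T by (auto intro: rev_finite_subset[OF fin])
  have "h (insert None (Some ` Pow S) \<union> insert None (Some ` Pow T))
      + h (insert None (Some ` Pow S) \<inter> insert None (Some ` Pow T))
      \<le> h (insert None (Some ` Pow S)) + h (insert None (Some ` Pow T))"
    using S T
    by (intro submodular_onD[OF submod, of "insert None (Some ` Pow S)" "insert None (Some ` Pow T)"])
      blast+
  moreover have "insert None (Some ` Pow S) \<union> insert None (Some ` Pow T) = insert None (Some ` (Pow S \<union> Pow T))"
    and "insert None (Some ` Pow S) \<inter> insert None (Some ` Pow T) = insert None (Some ` Pow (S \<inter> T))"
    by auto
  ultimately have union_le: "h (insert None (Some ` (Pow S \<union> Pow T))) + h (insert None (Some ` Pow (S \<inter> T)))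
      \<le> h (insert None (Some ` Pow S)) + h (insert None (Some ` Pow T))"
    by simp
  have "h (insert None (Some ` Pow (S \<union> T))) - h (insert None (Some ` (Pow S \<union> Pow T)))
      \<le> ?G (Pow (S \<union> T) - (Pow S \<union> Pow T))"
    using S T by (intro sum_cond_increment_ge) auto
  moreover have "?G (Pow (S \<union> T)) = ?G (Pow (S \<union> T) - (Pow S \<union> Pow T)) + ?G (Pow S \<union> Pow T)"
    using fin_S fin_T by (intro sum.subset_diff) auto
  moreover have "?G (Pow S \<union> Pow T) + ?G (Pow (S \<inter> T)) = ?G (Pow S) + ?G (Pow T)"
    using sum.union_inter[of "Pow S" "Pow T"] fin_S fin_T by simp
  ultimately have completion_le: "h (insert None (Some ` Pow (S \<union> T))) - h (insert None (Some ` (Pow S \<union> Pow T)))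
      \<le> ?G (Pow (S \<union> T)) + ?G (Pow (S \<inter> T)) - ?G (Pow S) - ?G (Pow T)"
    by linarith
  have combine: "(x - 1) * I + (y - 1) * I = (x + y - 2) * I" for x y I :: real
    by (simp add: algebra_simps)
  have card_eq: "real (card (S \<union> T)) + real (card (S \<inter> T)) = real (card S) + real (card T)"
    using card_Un_Int[OF fin_S fin_T] by linarith
  have "(real (card (S \<union> T)) - 1) * ?I + (real (card (S \<inter> T)) - 1) * ?I
      = (real (card S) + real (card T) - 2) * ?I"
    unfolding combine card_eq ..
  also have "\<dots> = (real (card S) - 1) * ?I + (real (card T) - 1) * ?I"
    by (rule combine[symmetric])
  finally show ?thesis
    using union_le completion_le unfolding psi_of_def by linarith
qed

end

lemma contra_polymatroid_psi_of:
  assumes "submodular_on (insert None (Some ` Pow {1..L})) h" and "h {} = 0"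
  shows "contra_polymatroid L (region L (psi_of h))"
  unfolding contra_polymatroid_def
proof (intro exI[of _ "psi_of h"] conjI allI impI refl)
  show "psi_of h {} = 0"
    using assms(2) by (rule psi_of_empty)
  show "psi_of h S \<le> psi_of h T" if "S \<subset> T \<and> T \<subseteq> {1..L}" for S T
    using that assms by (intro psi_of_mono[of "{1..L}"]) auto
  show "psi_of h S + psi_of h T \<le> psi_of h (S \<union> T) + psi_of h (S \<inter> T)"
    if "S \<subseteq> {1..L} \<and> T \<subseteq> {1..L}" for S T
    using that assms by (intro psi_of_supermodular[of "{1..L}"]) auto
qed

definition sources :: "('w \<Rightarrow> 'a) \<Rightarrow> ('i set \<Rightarrow> 'w \<Rightarrow> 'b) \<Rightarrow> 'i set option \<Rightarrow> 'w \<Rightarrow> 'a + 'b" where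
  "sources X Xs i = (case i of None \<Rightarrow> (\<lambda>w. Inl (X w)) | Some A \<Rightarrow> (\<lambda>w. Inr (Xs A w)))"

lemma sources_simps [simp]:
  "sources X Xs None w = Inl (X w)"
  "sources X Xs (Some A) w = Inr (Xs A w)"
  by (simp_all add: sources_def)

lemma finite_sources_image:
  assumes fin_X: "finite (X ` set_pmf p)" and fin_Xs: "\<And>A. A \<subseteq> N \<Longrightarrow> finite (Xs A ` set_pmf p)"
    and i: "i \<in> insert None (Some ` Pow N)"
  shows "finite (sources X Xs i ` set_pmf p)"
proof -
  consider "i = None" | A where "i = Some A" "A \<subseteq> N"
    using i by blast
  then show ?thesis
  proof cases
    case 1
    then have "sources X Xs i ` set_pmf p = Inl ` X ` set_pmf p"
      by (auto simp: image_image)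
    then show ?thesis
      using fin_X by simp
  next
    case 2
    then have "sources X Xs i ` set_pmf p = Inr ` Xs A ` set_pmf p"
      by (auto simp: image_image)
    then show ?thesis
      using fin_Xs[OF 2(2)] by simp
  qed
qed

lemma submodular_on_ent_sources:
  assumes fin_N: "finite N" and fin_X: "finite (X ` set_pmf p)"
    and fin_Xs: "\<And>A. A \<subseteq> N \<Longrightarrow> finite (Xs A ` set_pmf p)"
  shows "submodular_on (insert None (Some ` Pow N)) (\<lambda>D. ent p (joint (sources X Xs) D))"
  unfolding submodular_on_def
proof (intro allI impI)
  fix U V assume UV: "U \<subseteq> insert None (Some ` Pow N)" "V \<subseteq> insert None (Some ` Pow N)"
  have "finite (insert None (Some ` Pow N))"
    using fin_N by simp
  then have "finite U" "finite V"
    using UV by (auto intro: rev_finite_subset)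
  moreover have "finite (sources X Xs i ` set_pmf p)" if "i \<in> U \<union> V" for i
    using that UV by (intro finite_sources_image[where N = N, OF fin_X fin_Xs]) auto
  ultimately show "ent p (joint (sources X Xs) (U \<union> V)) + ent p (joint (sources X Xs) (U \<inter> V))
      \<le> ent p (joint (sources X Xs) U) + ent p (joint (sources X Xs) V)"
    by (rule ent_joint_submodular)
qed

lemma coll_eq_joint: "coll = joint"
  by (simp add: coll_def joint_def fun_eq_iff)

lemma psi_eq_psi_of_ent_sources:
  assumes fin_K: "finite K" and fin_X: "finite (X ` set_pmf p)"
    and fin_Xs: "\<And>A. A \<subseteq> K \<Longrightarrow> finite (Xs A ` set_pmf p)"
  shows "psi p X Xs K = psi_of (\<lambda>D. ent p (joint (sources X Xs) D)) K"
proof -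
  have fin: "finite (joint (sources X Xs) D ` set_pmf p)" if "D \<subseteq> insert None (Some ` Pow K)" for D
    using that fin_K finite_sources_image[where Xs = Xs and N = K, OF fin_X fin_Xs]
    by (intro finite_joint_image) (auto intro: rev_finite_subset[of "insert None (Some ` Pow K)"])
  let ?H = "\<lambda>D. ent p (joint (sources X Xs) D)"
  have "ent p X = ?H {None}" and "ent p (Xs {}) = ?H {Some {}}"
    and "ent p (\<lambda>w. (X w, Xs {} w)) = ?H {None, Some {}}"
    and "ent p (\<lambda>w. (coll Xs (Pow K) w, X w)) = ?H (insert None (Some ` Pow K))"
    by (rule ent_eq_if_same_fibers; auto intro!: fin simp: joint_eq_iff coll_eq_joint)+
  moreover have "cond_ent p (Xs A) (coll Xs (Pow A - {A})) = cond_increment ?H A" if "A \<subseteq> K" for A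
  proof -
    have "ent p (\<lambda>w. (Xs A w, coll Xs (Pow A - {A}) w)) = ?H (Some ` Pow A)"
      and "ent p (coll Xs (Pow A - {A})) = ?H (Some ` (Pow A - {A}))"
      by (rule ent_eq_if_same_fibers; use that in \<open>auto intro!: fin simp: joint_eq_iff coll_eq_joint\<close>)+
    then show ?thesis
      unfolding cond_ent_def cond_increment_def by simp
  qed
  ultimately show ?thesis
    unfolding psi_def psi_of_def mut_info_def cond_ent_def by simp
qed

lemma region_cong:
  assumes "\<And>K. K \<subseteq> {1..L} \<Longrightarrow> g K = g' K"
  shows "region L g = region L g'"
  using assms unfolding region_def by auto

theorem lemma2:
  fixes L :: nat and p :: "'w pmf" and X :: "'w \<Rightarrow> 'a" and Xs :: "nat set \<Rightarrow> 'w \<Rightarrow> 'b"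
  assumes "L > 0"
    and "finite (X ` set_pmf p)"
    and "\<And>K. K \<subseteq> {1..L} \<Longrightarrow> finite (Xs K ` set_pmf p)"
  shows "contra_polymatroid L (region L (psi p X Xs))"
proof -
  let ?H = "\<lambda>D. ent p (joint (sources X Xs) D)"
  have "region L (psi p X Xs) = region L (psi_of ?H)"
    using assms(2,3) by (intro region_cong psi_eq_psi_of_ent_sources) (auto intro: rev_finite_subset)
  moreover have "contra_polymatroid L (region L (psi_of ?H))"
    using assms(2,3) by (intro contra_polymatroid_psi_of submodular_on_ent_sources) (auto simp: ent_joint_empty)
  ultimately show ?thesis
    by simp
qed

end
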